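(* Let $l_0,\ldots,l_{N-1}$ be lines in the real projective plane in bounded general position, with associated graph $G$. Suppose $v_0,\ldots,v_{m-1}$ are vertices of $G$ connected consecutively by edges $e_0,\ldots,e_{m-1}$ of $G$ lying on distinct lines of the arrangement, and that these form (the boundary of) a convex $m$-polygon $V$. Then $V$ is an alcove.
   Context: Lines in $\mathbb{R}P^2$ are in general position if no three of them pass through a common point, and in bounded position if all their pairwise intersection points lie in the affine plane $\mathbb{R}^2$. For lines in bounded general position, the graph $G$ has as vertices the pairwise intersection points of the lines; two vertices $v_1,v_2$ are joined by an edge if some line of the arrangement contains both and no third vertex lies between them on that line; the edge is the closed segment joining them. An alcove is a subset $V\subset\mathbb{R}^2$ such that (i) $V$ is compact, convex and connected, (ii) its boundary $\partial V$ is a union of edges of $G$ belonging to distinct lines, and (iii) $V$ contains no proper subset $W$ satisfying (i) and (ii). *)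

theory Defs
  imports "HOL-Analysis.Analysis"
begin

text \<open>An (affine) line in the plane \<open>real^2\<close>.  Lines of \<open>RP^2\<close> in bounded position
  are never the line at infinity, so they are exactly affine lines of \<open>R^2\<close>.\<close>
definition is_line :: "(real^2) set \<Rightarrow> bool" where
  "is_line S \<longleftrightarrow> (\<exists>a c. a \<noteq> 0 \<and> S = {x. a \<bullet> x = c})"

definition bounded_general_position :: "(nat \<Rightarrow> (real^2) set) \<Rightarrow> nat \<Rightarrow> bool" where
  "bounded_general_position l N \<longleftrightarrow>
     (\<forall>i<N. is_line (l i)) \<and>
     (\<forall>i<N. \<forall>j<N. i \<noteq> j \<longrightarrow> l i \<noteq> l j) \<and>
     (\<forall>i<N. \<forall>j<N. i \<noteq> j \<longrightarrow> l i \<inter> l j \<noteq> {}) \<and>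
     (\<forall>i<N. \<forall>j<N. \<forall>k<N. i \<noteq> j \<and> j \<noteq> k \<and> i \<noteq> k \<longrightarrow> l i \<inter> l j \<inter> l k = {})"

definition arr_vertex :: "(nat \<Rightarrow> (real^2) set) \<Rightarrow> nat \<Rightarrow> real^2 \<Rightarrow> bool" where
  "arr_vertex l N p \<longleftrightarrow> (\<exists>i<N. \<exists>j<N. i \<noteq> j \<and> p \<in> l i \<and> p \<in> l j)"

definition arr_edge_on :: "(nat \<Rightarrow> (real^2) set) \<Rightarrow> nat \<Rightarrow> nat \<Rightarrow> real^2 \<Rightarrow> real^2 \<Rightarrow> bool" where
  "arr_edge_on l N i v1 v2 \<longleftrightarrow>
     i < N \<and> arr_vertex l N v1 \<and> arr_vertex l N v2 \<and> v1 \<noteq> v2 \<and>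
     v1 \<in> l i \<and> v2 \<in> l i \<and>
     (\<forall>w. arr_vertex l N w \<longrightarrow> w \<notin> open_segment v1 v2)"

definition arr_edges :: "(nat \<Rightarrow> (real^2) set) \<Rightarrow> nat \<Rightarrow> (nat \<times> (real^2) set) set" where
  "arr_edges l N = {(i, closed_segment v1 v2) | i v1 v2. arr_edge_on l N i v1 v2}"

text \<open>Conditions (i) and (ii) of the definition of an alcove.  (i) is read as:
  compact, convex, connected and with nonempty interior (a genuine 2-dimensional region).
  (ii): the boundary is the union of a set of edges of G lying on pairwise distinct lines.\<close>
definition alcove_cond :: "(nat \<Rightarrow> (real^2) set) \<Rightarrow> nat \<Rightarrow> (real^2) set \<Rightarrow> bool" where
  "alcove_cond l N V \<longleftrightarrow>
     compact V \<and> convex V \<and> connected V \<and> interior V \<noteq> {} \<and>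
     (\<exists>E. E \<subseteq> arr_edges l N \<and> inj_on fst E \<and> frontier V = \<Union>(snd ` E))"

definition alcove :: "(nat \<Rightarrow> (real^2) set) \<Rightarrow> nat \<Rightarrow> (real^2) set \<Rightarrow> bool" where
  "alcove l N V \<longleftrightarrow> alcove_cond l N V \<and> \<not> (\<exists>W. W \<subset> V \<and> alcove_cond l N W)"

end

theory Submission
  imports Defs
begin

text \<open>No line of the arrangement meets the interior of the polygon \<open>V\<close>.  A line carrying an
  edge is a supporting line of \<open>V\<close>.  Any other line through an interior point has vertices
  strictly on both sides, so it crosses some edge from \<open>v p\<close> to \<open>v (p + 1)\<close>; the crossing point is
  a vertex of \<open>G\<close>, hence not inside the edge, hence equal to \<open>v (p + 1)\<close>, which would put
  three lines through one point.  Now if \<open>W \<subset> V\<close> satisfied (i) and (ii), a segment from an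
  interior point of \<open>W\<close> to a point of \<open>V - W\<close> would leave \<open>W\<close> through a point of the
  interior of \<open>V\<close>; but the frontier of \<open>W\<close> lies on the lines.\<close>

lemma is_line_convex: "is_line S \<Longrightarrow> convex S"
  unfolding is_line_def using convex_hyperplane by blast

lemma bounded_general_position_is_line:
  "bounded_general_position l N \<Longrightarrow> i < N \<Longrightarrow> is_line (l i)"
  unfolding bounded_general_position_def by simp

lemma bounded_general_position_not_concurrent:
  assumes "bounded_general_position l N" "i < N" "j < N" "k < N" "i \<noteq> j" "j \<noteq> k" "i \<noteq> k"
  shows "l i \<inter> l j \<inter> l k = {}"
  using assms unfolding bounded_general_position_def by simp

lemma is_line_eq_affine_hull:
  fixes p q :: "real^2"
  assumes "is_line S" "p \<in> S" "q \<in> S" "p \<noteq> q"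
  shows "S = affine hull {p, q}"
proof -
  obtain a c where a: "a \<noteq> 0" and S: "S = {x. a \<bullet> x = c}"
    using assms(1) unfolding is_line_def by blast
  have aff: "affine S" unfolding S by (rule affine_hyperplane)
  then have "affine hull {p, q} \<subseteq> S" using assms(2,3) by (intro hull_minimal) auto
  moreover have "aff_dim (affine hull {p, q}) = aff_dim S" using a assms(4) unfolding S by simp
  ultimately show ?thesis
    using aff by (intro affine_dim_equal[symmetric]) auto
qed

lemma affine_hull_segment_in_frontier_disjoint_interior:
  fixes V :: "'a::euclidean_space set"
  assumes "convex V" "closed_segment p q \<subseteq> frontier V"
  shows "affine hull {p, q} \<inter> interior V = {}"
proof (rule ccontr)
  assume "affine hull {p, q} \<inter> interior V \<noteq> {}"
  then obtain y where y: "y \<in> affine hull {p, q}" "y \<in> interior V" by blast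
  have "p \<in> frontier V" "q \<in> frontier V" "midpoint p q \<in> frontier V"
    using assms(2) ends_in_segment midpoint_in_closed_segment by blast+
  then have pqx: "p \<in> closure V" "q \<in> closure V" "midpoint p q \<in> closure V"
      "midpoint p q \<notin> interior V"
    by (auto simp: frontier_def)
  have "rel_interior V = interior V" using y(2) by (intro rel_interior_nonempty_interior) auto
  txt \<open>The supporting line at the midpoint of the edge contains the whole edge.\<close>
  then obtain a where le: "\<And>z. z \<in> closure V \<Longrightarrow> a \<bullet> midpoint p q \<le> a \<bullet> z"
    and lt: "\<And>z. z \<in> interior V \<Longrightarrow> a \<bullet> midpoint p q < a \<bullet> z"
    using supporting_hyperplane_relative_frontier[OF assms(1) pqx(3)] pqx(4) by metis
  have mid: "a \<bullet> midpoint p q = (a \<bullet> p + a \<bullet> q) / 2"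
    by (simp add: midpoint_def inner_add_right)
  have "a \<bullet> p = a \<bullet> midpoint p q" and "a \<bullet> q = a \<bullet> midpoint p q"
    using le[OF pqx(1)] le[OF pqx(2)] mid by simp_all
  moreover obtain s t where "y = s *\<^sub>R p + t *\<^sub>R q" "s + t = 1"
    using y(1) by (auto simp: affine_hull_2)
  ultimately have "a \<bullet> y = a \<bullet> midpoint p q"
    by (simp add: inner_add_right flip: distrib_right)
  with lt[OF y(2)] show False by simp
qed

lemma interior_nonempty_if_three_extreme_points:
  fixes S :: "(real^2) set"
  assumes "convex S" "a extreme_point_of S" "b extreme_point_of S" "c extreme_point_of S"
    and "a \<noteq> b" "a \<noteq> c" "b \<noteq> c"
  shows "interior S \<noteq> {}"
proof -
  have inS: "a \<in> S" "b \<in> S" "c \<in> S" using assms(2-4) by (auto simp: extreme_point_of_def)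
  have not_between: "\<not> between (y, z) x"
    if "x extreme_point_of S" "y \<in> S" "z \<in> S" "x \<noteq> y" "x \<noteq> z" for x y z
    using that by (auto simp: between_mem_segment open_segment_def extreme_point_of_def)
  have "\<not> collinear {a, b, c}"
    unfolding collinear_between_cases using not_between assms inS by metis
  then have "\<not> affine_dependent {a, b, c}"
    using affine_dependent_imp_collinear_3 by blast
  moreover have "card {a, b, c} = Suc DIM(real^2)" using assms(5-7) by simp
  ultimately have "interior (convex hull {a, b, c}) \<noteq> {}"
    using interior_convex_hull_eq_empty by blast
  moreover have "convex hull {a, b, c} \<subseteq> S"
    using assms(1) inS by (intro hull_minimal) auto
  ultimately show ?thesis using interior_mono by blast
qed

lemma interior_convex_hull_exists_inner_gt:
  fixes S :: "'a::euclidean_space set"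
  assumes "y \<in> interior (convex hull S)" "a \<noteq> 0"
  shows "\<exists>x\<in>S. a \<bullet> y < a \<bullet> x"
proof (rule ccontr)
  assume "\<not> ?thesis"
  then have "convex hull S \<subseteq> {x. a \<bullet> x \<le> a \<bullet> y}"
    by (intro hull_minimal) (auto simp: convex_halfspace_le not_less)
  then have "interior (convex hull S) \<subseteq> interior {x. a \<bullet> x \<le> a \<bullet> y}"
    by (rule interior_mono)
  also have "\<dots> = {x. a \<bullet> x < a \<bullet> y}"
    using assms(2) by (rule interior_halfspace_le)
  finally have "interior (convex hull S) \<subseteq> {x. a \<bullet> x < a \<bullet> y}" .
  with assms(1) show False by auto
qed

lemma cyclic_transition_exists:
  assumes "k < m" "P k" "j < m" "\<not> P j"
  shows "\<exists>p<m. P p \<and> \<not> P (Suc p mod m)"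
proof (rule ccontr)
  assume step: "\<not> ?thesis"
  have "P ((k + n) mod m)" for n
  proof (induction n)
    case 0
    then show ?case using assms(1,2) by simp
  next
    case (Suc n)
    have "(k + n) mod m < m" using assms(1) by simp
    with step Suc.IH have "P (Suc ((k + n) mod m) mod m)" by blast
    then show ?case by (simp add: mod_Suc_eq)
  qed
  moreover have "(k + (j + m - k)) mod m = j" using assms(1,3) by simp
  ultimately show False using assms(4) by (metis (no_types))
qed

lemma arr_edge_on_subset_line:
  assumes "bounded_general_position l N" "arr_edge_on l N i u w"
  shows "closed_segment u w \<subseteq> l i"
proof (rule closed_segment_subset)
  show "u \<in> l i" "w \<in> l i" using assms(2) by (auto simp: arr_edge_on_def)
  show "convex (l i)"
    using assms bounded_general_position_is_line is_line_convex by (simp add: arr_edge_on_def)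
qed

lemma arr_edge_on_meets_line_at_endpoint:
  assumes "bounded_general_position l N" "arr_edge_on l N i u w" "j < N" "j \<noteq> i"
    and "z \<in> closed_segment u w" "z \<in> l j"
  shows "z = u \<or> z = w"
proof -
  have "z \<in> l i" using arr_edge_on_subset_line[OF assms(1,2)] assms(5) by blast
  moreover have "i < N" using assms(2) by (simp add: arr_edge_on_def)
  ultimately have "arr_vertex l N z"
    using assms(3,4,6) unfolding arr_vertex_def by blast
  then have "z \<notin> open_segment u w" using assms(2) by (simp add: arr_edge_on_def)
  with assms(5) show ?thesis by (simp add: open_segment_def)
qed

lemma polygon_interior_avoids_non_edge_line:
  assumes bgp: "bounded_general_position l N"
    and edges: "\<forall>k<m. arr_edge_on l N (L k) (v k) (v (Suc k mod m))"
    and "inj_on L {..<m}" "i < N" "i \<notin> L ` {..<m}"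
  shows "l i \<inter> interior (convex hull (v ` {..<m})) = {}"
proof (rule ccontr)
  assume "l i \<inter> interior (convex hull (v ` {..<m})) \<noteq> {}"
  then obtain y where yl: "y \<in> l i" and yint: "y \<in> interior (convex hull (v ` {..<m}))"
    by blast
  obtain a c where a: "a \<noteq> 0" and li: "l i = {x. a \<bullet> x = c}"
    using bounded_general_position_is_line[OF bgp \<open>i < N\<close>] unfolding is_line_def by blast
  have ay: "a \<bullet> y = c" using yl li by simp
  obtain k where "k < m" "c < a \<bullet> v k"
    using interior_convex_hull_exists_inner_gt[OF yint a] ay by auto
  moreover obtain j where "j < m" "\<not> c < a \<bullet> v j"
    using interior_convex_hull_exists_inner_gt[OF yint, of "- a"] a ay by auto
  ultimately obtain p where p: "p < m" "c < a \<bullet> v p" "\<not> c < a \<bullet> v (Suc p mod m)"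
    using cyclic_transition_exists[where P = "\<lambda>k. c < a \<bullet> v k"] by blast
  define q where "q = Suc p mod m"
  have q: "q < m" using p(1) unfolding q_def by simp
  have ep: "arr_edge_on l N (L p) (v p) (v q)" and eq: "arr_edge_on l N (L q) (v q) (v (Suc q mod m))"
    using edges p(1) q unfolding q_def by blast+
  obtain z where z: "z \<in> closed_segment (v p) (v q)" "a \<bullet> z = c"
    using connected_ivt_hyperplane[of "closed_segment (v p) (v q)" "v q" "v p" a c] p(2,3)
    unfolding q_def by auto
  have "z \<noteq> v p" using z(2) p(2) by auto
  moreover have "i \<noteq> L p" "i \<noteq> L q" using assms(5) p(1) q by auto
  ultimately have zq: "z = v q"
    using arr_edge_on_meets_line_at_endpoint[OF bgp ep \<open>i < N\<close>] z li by auto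
  have "p \<noteq> q" using ep by (auto simp: arr_edge_on_def)
  then have "L p \<noteq> L q" using assms(3) p(1) q by (auto dest: inj_onD)
  moreover have "v q \<in> l (L p)" "v q \<in> l (L q)" "L p < N" "L q < N"
    using ep eq by (auto simp: arr_edge_on_def)
  moreover have "v q \<in> l i" using zq z(2) li by simp
  ultimately show False
    using bounded_general_position_not_concurrent[OF bgp \<open>i < N\<close>, of "L p" "L q"]
      \<open>i \<noteq> L p\<close> \<open>i \<noteq> L q\<close> by blast
qed

lemma polygon_interior_avoids_lines:
  assumes bgp: "bounded_general_position l N"
    and edges: "\<forall>k<m. arr_edge_on l N (L k) (v k) (v (Suc k mod m))"
    and "inj_on L {..<m}"
    and V: "V = convex hull (v ` {..<m})"
    and frontier: "frontier V = (\<Union>k<m. closed_segment (v k) (v (Suc k mod m)))"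
    and "i < N"
  shows "l i \<inter> interior V = {}"
proof (cases "i \<in> L ` {..<m}")
  case True
  then obtain k where k: "k < m" "i = L k" by blast
  then have ek: "arr_edge_on l N i (v k) (v (Suc k mod m))" using edges by blast
  then have "l i = affine hull {v k, v (Suc k mod m)}"
    using bounded_general_position_is_line[OF bgp \<open>i < N\<close>]
    by (intro is_line_eq_affine_hull) (auto simp: arr_edge_on_def)
  moreover have "closed_segment (v k) (v (Suc k mod m)) \<subseteq> frontier V"
    using frontier k(1) by blast
  moreover have "convex V" using V by simp
  ultimately show ?thesis
    using affine_hull_segment_in_frontier_disjoint_interior by metis
next
  case False
  then show ?thesis
    using polygon_interior_avoids_non_edge_line[OF bgp edges assms(3) \<open>i < N\<close>] V by simp
qed

lemma frontier_meets_interior_of_convex_superset: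
  fixes V W :: "'a::euclidean_space set"
  assumes "convex V" "W \<subset> V" "closed W" "interior W \<noteq> {}"
  shows "frontier W \<inter> interior V \<noteq> {}"
proof -
  obtain x where x: "x \<in> V" "x \<notin> W" using assms(2) by blast
  obtain p where p: "p \<in> interior W" using assms(4) by blast
  then have pV: "p \<in> interior V" using interior_mono assms(2) by blast
  have "closed_segment p x \<inter> frontier W \<noteq> {}"
  proof (rule connected_Int_frontier)
    show "closed_segment p x \<inter> W \<noteq> {}" using p interior_subset by fastforce
    show "closed_segment p x - W \<noteq> {}" using x by auto
  qed simp
  then obtain z where z: "z \<in> closed_segment p x" "z \<in> frontier W" by blast
  have "z \<noteq> x" using z(2) x assms(3) frontier_subset_closed by blast
  then have "z = p \<or> z \<in> open_segment p x" using z(1) by (auto simp: open_segment_def)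
  moreover have "open_segment p x \<subseteq> interior V"
    using in_interior_closure_convex_segment[OF assms(1) pV] x closure_subset by blast
  ultimately show ?thesis using pV z(2) by blast
qed

lemma alcove_cond_frontier_subset_lines:
  assumes "bounded_general_position l N" "alcove_cond l N W"
  shows "frontier W \<subseteq> (\<Union>i<N. l i)"
proof
  fix z assume "z \<in> frontier W"
  obtain E where "E \<subseteq> arr_edges l N" "frontier W = \<Union>(snd ` E)"
    using assms(2) unfolding alcove_cond_def by blast
  with \<open>z \<in> frontier W\<close> obtain i S where "(i, S) \<in> arr_edges l N" "z \<in> S" by auto
  then obtain u w where e: "arr_edge_on l N i u w" "z \<in> closed_segment u w"
    unfolding arr_edges_def by blast
  then have "z \<in> l i" using arr_edge_on_subset_line[OF assms(1)] by blast
  moreover have "i < N" using e(1) by (simp add: arr_edge_on_def)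
  ultimately show "z \<in> (\<Union>i<N. l i)" by blast
qed

lemma alcove_if_lines_avoid_interior:
  assumes "bounded_general_position l N" "alcove_cond l N V"
    and "\<And>i. i < N \<Longrightarrow> l i \<inter> interior V = {}"
  shows "alcove l N V"
  unfolding alcove_def
proof (intro conjI notI)
  show "alcove_cond l N V" by (fact assms(2))
  assume "\<exists>W. W \<subset> V \<and> alcove_cond l N W"
  then obtain W where W: "W \<subset> V" "alcove_cond l N W" by blast
  then have "frontier W \<inter> interior V \<noteq> {}"
    using assms(2) compact_imp_closed
    by (intro frontier_meets_interior_of_convex_superset) (auto simp: alcove_cond_def)
  moreover have "frontier W \<subseteq> (\<Union>i<N. l i)"
    using alcove_cond_frontier_subset_lines[OF assms(1) W(2)] .
  ultimately show False using assms(3) by blast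
qed

theorem lemma1p5:
  fixes l :: "nat \<Rightarrow> (real^2) set" and N m :: nat
    and v :: "nat \<Rightarrow> real^2" and L :: "nat \<Rightarrow> nat" and V :: "(real^2) set"
  assumes "bounded_general_position l N"
    and "m \<ge> 3"
    and "\<forall>k<m. arr_edge_on l N (L k) (v k) (v (Suc k mod m))"
    and "inj_on L {..<m}"
    and "inj_on v {..<m}"
    and "V = convex hull (v ` {..<m})"
    and "\<forall>k<m. v k extreme_point_of V"
    and "frontier V = (\<Union>k<m. closed_segment (v k) (v (Suc k mod m)))"
  shows "alcove l N V"
proof (rule alcove_if_lines_avoid_interior[OF assms(1)])
  have "convex V" "compact V" using assms(6) by (auto intro: compact_convex_hull finite_imp_compact)
  moreover have "interior V \<noteq> {}"
  proof (rule interior_nonempty_if_three_extreme_points[of V "v 0" "v 1" "v 2"])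
    show "v 0 \<noteq> v 1" "v 0 \<noteq> v 2" "v 1 \<noteq> v 2"
      using assms(2,5) by (auto dest: inj_onD)
  qed (use \<open>convex V\<close> assms(2,7) in auto)
  moreover define E where "E = (\<lambda>k. (L k, closed_segment (v k) (v (Suc k mod m)))) ` {..<m}"
  then have "E \<subseteq> arr_edges l N" "inj_on fst E" "frontier V = \<Union>(snd ` E)"
    using assms(3,4,8) unfolding arr_edges_def by (auto simp: inj_on_def image_image)
  ultimately show "alcove_cond l N V"
    unfolding alcove_cond_def by (meson convex_connected)
  show "l i \<inter> interior V = {}" if "i < N" for i
    using polygon_interior_avoids_lines[OF assms(1,3,4,6,8) that] .
qed

end
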